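(* Let $K\ge2$, $p\in(0,1)$. Then $$J_*^{\mathrm{OA}}:=\sup_{\lambda\in\mathcal P(\mathcal S)}\ \inf_{\sigma\neq\mathrm{id}}\ D_\lambda\big(f^{\mathrm{OA}}_{\mathrm{id}}\,\|\,f^{\mathrm{OA}}_\sigma\big)=\log\!\Big(\frac1p\Big)\cdot\frac{1-p}{K-1+p},$$ where the infimum is over all bijections $\sigma:[K]\to[K]$ other than the identity. Moreover, the supremum is attained at $$\lambda^*(S)=\begin{cases}\dfrac{1-p^{K-n+1}}{K-1+p}&\text{if }S=\{n,n+1,\dots,K\}\text{ for some }n\in\{2,\dots,K-1\},\\[2mm]\dfrac{1-p^K}{(1-p)(K-1+p)}&\text{if }S=[K],\\[2mm] 0&\text{otherwise.}\end{cases}$$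
   Context: Items are $[K]=\{1,\dots,K\}$, $\mathcal S=\{S\subseteq[K]:|S|\ge2\}$, and $\mathcal P(\mathcal S)$ is the set of probability distributions on $\mathcal S$. For a bijection $\sigma:[K]\to[K]$, $S\in\mathcal S$, $i\in S$, let $\sigma(i\mid S)=1+|\{j\in S:\sigma(j)<\sigma(i)\}|$ (local rank) and define the Ordinal Attraction preference $f^{\mathrm{OA}}_\sigma(i\mid S)=\frac{1-p}{1-p^{|S|}}p^{\sigma(i\mid S)-1}$ for $i\in S$. For preferences $f,f'$ (families of positive probability vectors $f(\cdot\mid S)$ on each $S$), $D_S(f\|f')=\sum_{i\in S}f(i\mid S)\log\frac{f(i\mid S)}{f'(i\mid S)}$ and $D_\lambda(f\|f')=\sum_{S\in\mathcal S}\lambda(S)D_S(f\|f')$. *)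

theory Defs
  imports Complex_Main "HOL-Combinatorics.Permutations"
begin

definition subsets_ge2 :: "nat \<Rightarrow> nat set set" where
  "subsets_ge2 K = {S. S \<subseteq> {1..K} \<and> card S \<ge> 2}"

definition local_rank :: "(nat \<Rightarrow> nat) \<Rightarrow> nat set \<Rightarrow> nat \<Rightarrow> nat" where
  "local_rank \<sigma> S i = 1 + card {j \<in> S. \<sigma> j < \<sigma> i}"

definition OA :: "real \<Rightarrow> (nat \<Rightarrow> nat) \<Rightarrow> nat \<Rightarrow> nat set \<Rightarrow> real" where
  "OA p \<sigma> i S = (1 - p) / (1 - p ^ card S) * p ^ (local_rank \<sigma> S i - 1)"

definition KL_S :: "(nat \<Rightarrow> nat set \<Rightarrow> real) \<Rightarrow> (nat \<Rightarrow> nat set \<Rightarrow> real) \<Rightarrow> nat set \<Rightarrow> real" where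
  "KL_S f g S = (\<Sum>i\<in>S. f i S * ln (f i S / g i S))"

definition KL_lam :: "nat \<Rightarrow> (nat set \<Rightarrow> real) \<Rightarrow> (nat \<Rightarrow> nat set \<Rightarrow> real) \<Rightarrow> (nat \<Rightarrow> nat set \<Rightarrow> real) \<Rightarrow> real" where
  "KL_lam K lam f g = (\<Sum>S\<in>subsets_ge2 K. lam S * KL_S f g S)"

definition distributions :: "nat \<Rightarrow> (nat set \<Rightarrow> real) set" where
  "distributions K = {lam. (\<forall>S\<in>subsets_ge2 K. 0 \<le> lam S) \<and> (\<forall>S. S \<notin> subsets_ge2 K \<longrightarrow> lam S = 0)
                          \<and> (\<Sum>S\<in>subsets_ge2 K. lam S) = 1}"

definition nonid_perms :: "nat \<Rightarrow> (nat \<Rightarrow> nat) set" where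
  "nonid_perms K = {\<sigma>. \<sigma> permutes {1..K} \<and> \<sigma> \<noteq> id}"

definition lam_star :: "nat \<Rightarrow> real \<Rightarrow> nat set \<Rightarrow> real" where
  "lam_star K p S =
     (if (\<exists>n. 2 \<le> n \<and> n \<le> K - 1 \<and> S = {n..K})
      then (1 - p ^ (K - Min S + 1)) / (real K - 1 + p)
      else if S = {1..K} then (1 - p ^ K) / ((1 - p) * (real K - 1 + p))
      else 0)"

end

theory Submission
  imports Defs
begin

text \<open>
  Because f\<sigma>(i | S) / fid(i | S) = p ^ (rank\<sigma>(i) - rankid(i)), the divergence D_S(fid \<parallel> f\<sigma>) is
  ln(1/p) times the sum, over the pairs i < j of S inverted by \<sigma>, of the drops
  fid(i | S) - fid(j | S) \<ge> 0. Every \<sigma> \<noteq> id inverts an adjacent pair (k, k+1), so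
  D_\<lambda>(\<sigma>) \<ge> D_\<lambda>(\<tau>_k) for the adjacent transposition \<tau>_k: the inner infimum is a minimum over
  \<tau>_1, \<dots>, \<tau>_(K-1). For a fixed S the drops telescope, which gives
  \<Sum>_(k<K-1) D_S(\<tau>_k) + (1+p) D_S(\<tau>_(K-1)) \<le> ln(1/p) (1-p); as these weights add up to K-1+p,
  some D_\<lambda>(\<tau>_k) is at most ln(1/p) (1-p) / (K-1+p). The design \<lambda>* makes every D_\<lambda>*(\<tau>_k) equal
  to this value.
\<close>

definition OA_norm :: "real \<Rightarrow> nat set \<Rightarrow> real" where
  "OA_norm p S = (1 - p) / (1 - p ^ card S)"

definition inversion_gap :: "real \<Rightarrow> (nat \<Rightarrow> nat) \<Rightarrow> nat set \<Rightarrow> real" where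
  "inversion_gap p \<sigma> S =
     (\<Sum>i\<in>S. \<Sum>j\<in>S. if i < j \<and> \<sigma> j < \<sigma> i then OA p id i S - OA p id j S else 0)"

abbreviation adj_transp :: "nat \<Rightarrow> nat \<Rightarrow> nat" where
  "adj_transp k \<equiv> Transposition.transpose k (Suc k)"

lemma OA_eq: "OA p \<sigma> i S = OA_norm p S * p ^ card {j\<in>S. \<sigma> j < \<sigma> i}"
  by (simp add: OA_def local_rank_def OA_norm_def)

lemma OA_id_eq: "OA p id i S = OA_norm p S * p ^ card {j\<in>S. j < i}"
  by (simp add: OA_eq)

lemma OA_norm_pos: "0 < p \<Longrightarrow> p < 1 \<Longrightarrow> 0 < card S \<Longrightarrow> 0 < OA_norm p S"
  unfolding OA_norm_def by (simp add: power_less_one_iff)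

lemma OA_id_antimono:
  assumes "0 < card S" "0 < p" "p < 1" "i \<le> j"
  shows "OA p id j S \<le> OA p id i S"
  unfolding OA_id_eq using assms
  by (intro mult_left_mono power_decreasing card_mono less_imp_le[OF OA_norm_pos])
     (auto simp: card_gt_0_iff)

lemma card_less_Suc: "finite S \<Longrightarrow> k \<in> S \<Longrightarrow> card {l\<in>S. l < Suc k} = Suc (card {l\<in>S. l < k})"
proof -
  assume "finite S" "k \<in> S"
  then have "{l\<in>S. l < Suc k} = insert k {l\<in>S. l < k}" by auto
  then show ?thesis using \<open>finite S\<close> by simp
qed

section \<open>Divergences as sums over inversions\<close>

lemma sum_mult_rank_diff_eq_inversions:
  fixes f :: "nat \<Rightarrow> real" and \<sigma> :: "nat \<Rightarrow> nat"
  assumes fin: "finite S" and inj: "inj_on \<sigma> S"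
  shows "(\<Sum>i\<in>S. f i * (real (card {j\<in>S. \<sigma> j < \<sigma> i}) - real (card {j\<in>S. j < i})))
       = (\<Sum>i\<in>S. \<Sum>j\<in>S. if i < j \<and> \<sigma> j < \<sigma> i then f i - f j else 0)"
proof -
  have pair: "f i * ((if \<sigma> j < \<sigma> i then 1 else 0) - (if j < i then 1 else 0))
     = (if i < j \<and> \<sigma> j < \<sigma> i then f i else 0) - (if j < i \<and> \<sigma> i < \<sigma> j then f i else 0)"
    if "i \<in> S" "j \<in> S" for i j
  proof (cases "i = j")
    case False
    then have "\<sigma> i \<noteq> \<sigma> j" using inj that by (meson inj_onD)
    then show ?thesis using False by (cases "i < j"; cases "\<sigma> j < \<sigma> i") auto
  qed simp
  have card_sum: "real (card {j\<in>S. P j}) = (\<Sum>j\<in>S. if P j then 1 else 0)" for P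
    using fin by (simp add: sum.If_cases Int_def conj_commute)
  have "(\<Sum>i\<in>S. f i * (real (card {j\<in>S. \<sigma> j < \<sigma> i}) - real (card {j\<in>S. j < i})))
     = (\<Sum>i\<in>S. \<Sum>j\<in>S. f i * ((if \<sigma> j < \<sigma> i then 1 else 0) - (if j < i then 1 else 0)))"
    by (simp add: card_sum sum_subtractf[symmetric] sum_distrib_left)
  also have "\<dots> = (\<Sum>i\<in>S. \<Sum>j\<in>S. if i < j \<and> \<sigma> j < \<sigma> i then f i else 0)
                - (\<Sum>i\<in>S. \<Sum>j\<in>S. if j < i \<and> \<sigma> i < \<sigma> j then f i else 0)"
    by (simp add: pair sum_subtractf)
  also have "(\<Sum>i\<in>S. \<Sum>j\<in>S. if j < i \<and> \<sigma> i < \<sigma> j then f i else 0)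
           = (\<Sum>i\<in>S. \<Sum>j\<in>S. if i < j \<and> \<sigma> j < \<sigma> i then f j else 0)"
    by (rule sum.swap)
  finally show ?thesis by (simp add: sum_subtractf[symmetric] if_distrib cong: if_cong)
qed

lemma KL_S_OA_eq_inversion_gap:
  assumes ne: "0 < card S" and inj: "inj_on \<sigma> S" and p: "0 < p" "p < 1"
  shows "KL_S (OA p id) (OA p \<sigma>) S = ln (1 / p) * inversion_gap p \<sigma> S"
proof -
  have "OA_norm p S > 0" using OA_norm_pos p ne by blast
  then have log_ratio: "ln (OA p id i S / OA p \<sigma> i S)
      = ln (1 / p) * (real (card {j\<in>S. \<sigma> j < \<sigma> i}) - real (card {j\<in>S. j < i}))" for i
    using p by (simp add: OA_eq ln_div ln_realpow ln_inverse algebra_simps)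
  have "KL_S (OA p id) (OA p \<sigma>) S
     = ln (1 / p) * (\<Sum>i\<in>S. OA p id i S * (real (card {j\<in>S. \<sigma> j < \<sigma> i}) - real (card {j\<in>S. j < i})))"
    unfolding KL_S_def log_ratio by (simp add: sum_distrib_left algebra_simps)
  also have "\<dots> = ln (1 / p) * inversion_gap p \<sigma> S"
    using sum_mult_rank_diff_eq_inversions[OF _ inj] ne
    by (simp add: inversion_gap_def card_gt_0_iff)
  finally show ?thesis .
qed

lemma inversion_gap_term_nonneg:
  assumes "0 < card S" "0 < p" "p < 1"
  shows "0 \<le> (if i < j \<and> \<sigma> j < \<sigma> i then OA p id i S - OA p id j S else 0)"
  using OA_id_antimono[OF assms, of i j] by auto

lemma inversion_gap_nonneg: "0 < card S \<Longrightarrow> 0 < p \<Longrightarrow> p < 1 \<Longrightarrow> 0 \<le> inversion_gap p \<sigma> S"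
  unfolding inversion_gap_def by (intro sum_nonneg inversion_gap_term_nonneg)

lemma inversion_gap_ge_inversion:
  assumes ne: "0 < card S" and p: "0 < p" "p < 1"
    and ij: "i \<in> S" "j \<in> S" "i < j" and inv: "\<sigma> j < \<sigma> i"
  shows "OA p id i S - OA p id j S \<le> inversion_gap p \<sigma> S"
proof -
  have fin: "finite S" using ne by (simp add: card_gt_0_iff)
  let ?g = "\<lambda>i j. if i < j \<and> \<sigma> j < \<sigma> i then OA p id i S - OA p id j S else 0"
  have "OA p id i S - OA p id j S = ?g i j" using ij inv by simp
  also have "\<dots> \<le> (\<Sum>j\<in>S. ?g i j)"
    by (rule member_le_sum[OF ij(2)]) (simp_all add: fin inversion_gap_term_nonneg[OF ne p])
  also have "\<dots> \<le> (\<Sum>i\<in>S. \<Sum>j\<in>S. ?g i j)"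
    by (rule member_le_sum[OF ij(1)])
       (simp_all add: fin inversion_gap_term_nonneg[OF ne p] sum_nonneg)
  finally show ?thesis unfolding inversion_gap_def .
qed

lemma inversion_gap_adj_transp:
  assumes fin: "finite S"
  shows "inversion_gap p (adj_transp k) S
       = (if k \<in> S \<and> Suc k \<in> S then OA p id k S - OA p id (Suc k) S else 0)"
proof -
  have inverted: "(i < j \<and> adj_transp k j < adj_transp k i) = (i = k \<and> j = Suc k)" for i j
    by (auto simp: Transposition.transpose_def)
  let ?v = "OA p id k S - OA p id (Suc k) S"
  have "inversion_gap p (adj_transp k) S = (\<Sum>i\<in>S. if i = k then (if Suc k \<in> S then ?v else 0) else 0)"
    unfolding inversion_gap_def inverted
  proof (intro sum.cong refl)
    fix i
    show "(\<Sum>j\<in>S. if i = k \<and> j = Suc k then OA p id i S - OA p id j S else 0)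
         = (if i = k then (if Suc k \<in> S then ?v else 0) else 0)"
      using fin by (cases "i = k") (simp_all add: sum.delta)
  qed
  also have "\<dots> = (if k \<in> S \<and> Suc k \<in> S then ?v else 0)"
    using fin by (simp add: sum.delta)
  finally show ?thesis .
qed

lemma inversion_gap_adj_transp_le:
  "0 < card S \<Longrightarrow> 0 < p \<Longrightarrow> p < 1
    \<Longrightarrow> inversion_gap p (adj_transp k) S \<le> OA p id k S - OA p id (Suc k) S"
  using inversion_gap_adj_transp[of S p k] OA_id_antimono[of S p k "Suc k"]
  by (auto simp: card_gt_0_iff)

section \<open>Reduction to adjacent transpositions\<close>

lemma subsets_ge2_finite: "finite (subsets_ge2 K)"
  by (rule finite_subset[of _ "Pow {1..K}"]) (auto simp: subsets_ge2_def)

lemma subsets_ge2_D: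
  "S \<in> subsets_ge2 K \<Longrightarrow> 0 < card S \<and> 2 \<le> card S \<and> finite S \<and> S \<subseteq> {1..K}"
  unfolding subsets_ge2_def by (auto intro: finite_subset)

lemma KL_lam_OA_eq:
  assumes "\<sigma> permutes {1..K}" "0 < p" "p < 1"
  shows "KL_lam K lam (OA p id) (OA p \<sigma>)
       = (\<Sum>S\<in>subsets_ge2 K. lam S * (ln (1 / p) * inversion_gap p \<sigma> S))"
  unfolding KL_lam_def
proof (intro sum.cong refl)
  fix S assume "S \<in> subsets_ge2 K"
  moreover have "inj_on \<sigma> S" using permutes_inj[OF assms(1)] by (simp add: inj_on_def inj_def)
  ultimately show "lam S * KL_S (OA p id) (OA p \<sigma>) S = lam S * (ln (1 / p) * inversion_gap p \<sigma> S)"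
    using KL_S_OA_eq_inversion_gap assms subsets_ge2_D by simp
qed

lemma adj_transp_permutes: "1 \<le> k \<Longrightarrow> k < K \<Longrightarrow> adj_transp k permutes {1..K}"
  by (rule permutes_swap_id) auto

lemma adj_transp_in_nonid_perms: "1 \<le> k \<Longrightarrow> k < K \<Longrightarrow> adj_transp k \<in> nonid_perms K"
  unfolding nonid_perms_def using adj_transp_permutes by (auto simp: transpose_eq_id_iff)

lemma permutes_nonid_has_descent:
  assumes perm: "\<sigma> permutes {1..K}" and nonid: "\<sigma> \<noteq> id"
  shows "\<exists>k. 1 \<le> k \<and> k < K \<and> \<sigma> (Suc k) < \<sigma> k"
proof (rule ccontr)
  assume "\<not> ?thesis"
  then have mono: "\<sigma> k < \<sigma> (Suc k)" if "1 \<le> k" "k < K" for k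
    using permutes_inj[OF perm] that by (metis inj_eq linorder_neqE_nat n_not_Suc_n)
  have range: "\<sigma> i \<in> {1..K}" if "i \<in> {1..K}" for i
    using permutes_in_image[OF perm] that by blast
  have ge: "i \<le> \<sigma> i" if "1 \<le> i" "i \<le> K" for i
    using that
  proof (induction i rule: dec_induct)
    case base then show ?case using range[of 1] by auto
  next
    case (step n) then show ?case using mono[of n] by auto
  qed
  have le: "\<sigma> (K - d) \<le> K - d" if "d < K" for d
    using that
  proof (induction d)
    case 0 then show ?case using range[of K] by auto
  next
    case (Suc d)
    then have "\<sigma> (K - Suc d) < \<sigma> (Suc (K - Suc d))" by (intro mono) auto
    moreover have "Suc (K - Suc d) = K - d" using Suc by auto
    ultimately show ?case using Suc by auto
  qed
  have "\<sigma> i = i" for i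
  proof (cases "i \<in> {1..K}")
    case True
    then show ?thesis using le[of "K - i"] ge[of i] by auto
  next
    case False then show ?thesis using permutes_not_in[OF perm] by blast
  qed
  then show False using nonid by auto
qed

lemma KL_lam_adj_transp_le:
  assumes lam: "\<forall>S\<in>subsets_ge2 K. 0 \<le> lam S" and \<sigma>: "\<sigma> \<in> nonid_perms K" and p: "0 < p" "p < 1"
  shows "\<exists>k. 1 \<le> k \<and> k < K \<and>
     KL_lam K lam (OA p id) (OA p (adj_transp k)) \<le> KL_lam K lam (OA p id) (OA p \<sigma>)"
proof -
  have perm: "\<sigma> permutes {1..K}" using \<sigma> unfolding nonid_perms_def by auto
  obtain k where k: "1 \<le> k" "k < K" "\<sigma> (Suc k) < \<sigma> k"
    using permutes_nonid_has_descent[OF perm] \<sigma> unfolding nonid_perms_def by blast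
  have "KL_lam K lam (OA p id) (OA p (adj_transp k)) \<le> KL_lam K lam (OA p id) (OA p \<sigma>)"
    unfolding KL_lam_OA_eq[OF adj_transp_permutes[OF k(1,2)] p] KL_lam_OA_eq[OF perm p]
  proof (rule sum_mono)
    fix S assume S: "S \<in> subsets_ge2 K"
    then have ne: "0 < card S" using subsets_ge2_D by blast
    have "inversion_gap p (adj_transp k) S \<le> inversion_gap p \<sigma> S"
      using inversion_gap_adj_transp[of S p k] inversion_gap_ge_inversion[OF ne p, of k "Suc k" \<sigma>] k(3)
        inversion_gap_nonneg[OF ne p, of \<sigma>] ne
      by (auto simp: card_gt_0_iff)
    then show "lam S * (ln (1 / p) * inversion_gap p (adj_transp k) S)
             \<le> lam S * (ln (1 / p) * inversion_gap p \<sigma> S)"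
      using p lam S by (intro mult_left_mono) auto
  qed
  then show ?thesis using k by blast
qed

lemma INF_nonid_perms_eq_Min_adj_transp:
  assumes lam: "\<forall>S\<in>subsets_ge2 K. 0 \<le> lam S" and K: "2 \<le> K" and p: "0 < p" "p < 1"
  shows "(INF \<sigma>\<in>nonid_perms K. KL_lam K lam (OA p id) (OA p \<sigma>))
       = (MIN k\<in>{1..<K}. KL_lam K lam (OA p id) (OA p (adj_transp k)))"
proof (rule cInf_eq_minimum)
  let ?D = "\<lambda>\<sigma>. KL_lam K lam (OA p id) (OA p \<sigma>)"
  have fin: "finite ((\<lambda>k. ?D (adj_transp k)) ` {1..<K})" and ne: "{1..<K} \<noteq> {}"
    using K by auto
  have "(MIN k\<in>{1..<K}. ?D (adj_transp k)) \<in> (\<lambda>k. ?D (adj_transp k)) ` {1..<K}"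
    using Min_in[OF fin] ne by blast
  then obtain k where k: "k \<in> {1..<K}" "?D (adj_transp k) = (MIN k\<in>{1..<K}. ?D (adj_transp k))"
    by auto
  then show "(MIN k\<in>{1..<K}. ?D (adj_transp k)) \<in> ?D ` nonid_perms K"
    using adj_transp_in_nonid_perms by force
  fix x assume "x \<in> ?D ` nonid_perms K"
  then obtain \<sigma> where "\<sigma> \<in> nonid_perms K" "x = ?D \<sigma>" by blast
  then obtain k where "k \<in> {1..<K}" "?D (adj_transp k) \<le> x"
    using KL_lam_adj_transp_le[OF lam _ p] by force
  then show "(MIN k\<in>{1..<K}. ?D (adj_transp k)) \<le> x"
    using Min_le[OF fin] by (meson image_eqI order_trans)
qed

section \<open>An upper bound valid for every design\<close>

lemma sum_inversion_gap_adj_transp_le: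
  assumes "0 < card S" "0 < p" "p < 1" "a \<le> b"
  shows "(\<Sum>k = a..<b. inversion_gap p (adj_transp k) S) \<le> OA p id a S - OA p id b S"
proof -
  have "(\<Sum>k = a..<b. inversion_gap p (adj_transp k) S) \<le> (\<Sum>k = a..<b. OA p id k S - OA p id (Suc k) S)"
    using assms by (intro sum_mono inversion_gap_adj_transp_le)
  also have "\<dots> = OA p id a S - OA p id b S"
    using sum_Suc_diff'[of a b "\<lambda>i. - OA p id i S"] assms(4) by simp
  finally show ?thesis .
qed

lemma inversion_gaps_weighted_sum_le:
  assumes S: "S \<in> subsets_ge2 K" and K: "2 \<le> K" and p: "0 < p" "p < 1"
  shows "(\<Sum>k = 1..<K - 1. inversion_gap p (adj_transp k) S)
          + (1 + p) * inversion_gap p (adj_transp (K - 1)) S \<le> 1 - p"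
proof -
  have ne: "0 < card S" and m2: "2 \<le> card S" and fin: "finite S" and sub: "S \<subseteq> {1..K}"
    using subsets_ge2_D[OF S] by auto
  define f where "f x = OA p id x S" for x
  define c where "c = OA_norm p S"
  define m where "m = card S"
  have f_eq: "f x = c * p ^ card {l\<in>S. l < x}" for x unfolding f_def c_def OA_id_eq ..
  obtain j where j: "m = Suc (Suc j)" using m2 unfolding m_def by (metis add_2_eq_Suc le_Suc_ex)
  have "c > 0" unfolding c_def using OA_norm_pos ne p by blast
  have "p ^ m \<le> p ^ 1" using p m2 unfolding m_def by (intro power_decreasing) auto
  then have c_m: "c * (1 - p ^ m) = 1 - p" using p unfolding c_def OA_norm_def m_def by simp
  have "{l\<in>S. l < 1} = {}" using sub by auto
  then have "f 1 = c" by (simp only: f_eq card.empty power_0 mult_1_right)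
  then have telescope: "(\<Sum>k = 1..<K - 1. inversion_gap p (adj_transp k) S) \<le> c - f (K - 1)"
    using sum_inversion_gap_adj_transp_le[OF ne p, of 1 "K - 1"] K unfolding f_def by simp
  have sK: "Suc (K - 1) = K" using K by simp
  show ?thesis
  proof (cases "K - 1 \<in> S \<and> K \<in> S")
    case True
    have last_gap: "inversion_gap p (adj_transp (K - 1)) S = f (K - 1) - f K"
      using inversion_gap_adj_transp[OF fin, of p "K - 1"] True unfolding f_def sK by simp
    have "{l\<in>S. l < K} = S - {K}" using sub by auto
    then have f_K: "f K = c * p ^ Suc j" unfolding f_eq using True fin j m_def by simp
    have "{l\<in>S. l < K - 1} = S - {K - 1, K}" using sub by (auto simp: subset_iff)
    then have "f (K - 1) = c * p ^ j" unfolding f_eq using True fin K j m_def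
      by (simp add: card_Diff_subset)
    then have "c - f (K - 1) + (1 + p) * (f (K - 1) - f K) = c * (1 - p ^ m)"
      using f_K j by (simp add: algebra_simps)
    then show ?thesis using telescope last_gap c_m by simp
  next
    case False
    then have "inversion_gap p (adj_transp (K - 1)) S = 0"
      using inversion_gap_adj_transp[OF fin, of p "K - 1"] unfolding sK by auto
    moreover have "card {l\<in>S. l < K - 1} \<le> m" unfolding m_def using fin by (intro card_mono) auto
    then have "p ^ m \<le> p ^ card {l\<in>S. l < K - 1}" using p by (intro power_decreasing) auto
    then have "c - f (K - 1) \<le> c * (1 - p ^ m)" unfolding f_eq using \<open>c > 0\<close> by (simp add: algebra_simps)
    ultimately show ?thesis using telescope c_m by simp
  qed
qed

lemma KL_lam_adj_transp_weighted_sum: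
  assumes K: "2 \<le> K" and p: "0 < p" "p < 1"
  shows "(\<Sum>k = 1..<K - 1. KL_lam K lam (OA p id) (OA p (adj_transp k)))
           + (1 + p) * KL_lam K lam (OA p id) (OA p (adj_transp (K - 1)))
       = (\<Sum>S\<in>subsets_ge2 K. lam S * ln (1 / p) *
           ((\<Sum>k = 1..<K - 1. inversion_gap p (adj_transp k) S)
              + (1 + p) * inversion_gap p (adj_transp (K - 1)) S))"
proof -
  let ?L = "ln (1 / p)"
  have D_eq: "KL_lam K lam (OA p id) (OA p (adj_transp k))
      = (\<Sum>S\<in>subsets_ge2 K. lam S * ?L * inversion_gap p (adj_transp k) S)"
    if "1 \<le> k" "k < K" for k
    using KL_lam_OA_eq[OF adj_transp_permutes[OF that] p] by (simp add: mult.assoc)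
  have "(\<Sum>k = 1..<K - 1. KL_lam K lam (OA p id) (OA p (adj_transp k)))
      = (\<Sum>k = 1..<K - 1. \<Sum>S\<in>subsets_ge2 K. lam S * ?L * inversion_gap p (adj_transp k) S)"
    by (rule sum.cong[OF refl D_eq]) auto
  also have "\<dots> = (\<Sum>S\<in>subsets_ge2 K. lam S * ?L * (\<Sum>k = 1..<K - 1. inversion_gap p (adj_transp k) S))"
    by (subst sum.swap) (simp add: sum_distrib_left)
  moreover have "(1 + p) * KL_lam K lam (OA p id) (OA p (adj_transp (K - 1)))
      = (\<Sum>S\<in>subsets_ge2 K. lam S * ?L * ((1 + p) * inversion_gap p (adj_transp (K - 1)) S))"
    using D_eq[of "K - 1"] K by (simp add: sum_distrib_left mult_ac)
  ultimately show ?thesis by (simp add: sum.distrib distrib_left)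
qed

lemma Min_adj_transp_KL_lam_le:
  assumes lam: "lam \<in> distributions K" and K: "2 \<le> K" and p: "0 < p" "p < 1"
  shows "(MIN k\<in>{1..<K}. KL_lam K lam (OA p id) (OA p (adj_transp k)))
       \<le> ln (1 / p) * ((1 - p) / (real K - 1 + p))"
proof -
  let ?D = "\<lambda>k. KL_lam K lam (OA p id) (OA p (adj_transp k))"
  let ?m = "MIN k\<in>{1..<K}. ?D k"
  let ?L = "ln (1 / p)"
  have lam_nonneg: "\<And>S. S \<in> subsets_ge2 K \<Longrightarrow> 0 \<le> lam S"
    and lam_sum: "(\<Sum>S\<in>subsets_ge2 K. lam S) = 1"
    using lam unfolding distributions_def by auto
  have m_le: "?m \<le> ?D k" if "k \<in> {1..<K}" for k
    using that by (intro Min_le) auto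
  have weights: "(real K - 1 + p) * x = (\<Sum>k = 1..<K - 1. x) + (1 + p) * x" for x :: real
    using K by (simp add: algebra_simps of_nat_diff)
  have "(real K - 1 + p) * ?m = (\<Sum>k = 1..<K - 1. ?m) + (1 + p) * ?m"
    by (rule weights)
  also have "\<dots> \<le> (\<Sum>k = 1..<K - 1. ?D k) + (1 + p) * ?D (K - 1)"
    using K p by (intro add_mono sum_mono mult_left_mono m_le) auto
  also have "\<dots> \<le> (\<Sum>S\<in>subsets_ge2 K. lam S * ?L * (1 - p))"
    unfolding KL_lam_adj_transp_weighted_sum[OF K p]
    using lam_nonneg p by (intro sum_mono mult_left_mono inversion_gaps_weighted_sum_le K) auto
  also have "\<dots> = ?L * (1 - p)"
    using lam_sum by (simp add: sum_distrib_right[symmetric])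
  finally show ?thesis
    using K p by (simp add: field_simps)
qed

section \<open>The optimal design\<close>

lemma lam_star_outside:
  assumes "S \<notin> (\<lambda>n. {n..K}) ` {1..K - 1}" and "2 \<le> K"
  shows "lam_star K p S = 0"
proof -
  have tail: "\<not> (\<exists>n. 2 \<le> n \<and> n \<le> K - 1 \<and> S = {n..K})" and full: "S \<noteq> {1..K}"
    using assms by force+
  show ?thesis unfolding lam_star_def if_not_P[OF tail] if_not_P[OF full] ..
qed

lemma lam_star_interval:
  assumes "n \<in> {1..K - 1}"
  shows "lam_star K p {n..K} = (if n = 1 then (1 - p ^ K) / ((1 - p) * (real K - 1 + p))
                                else (1 - p ^ (K + 1 - n)) / (real K - 1 + p))"
proof (cases "n = 1")
  case True
  then have none: "\<not> (\<exists>m. 2 \<le> m \<and> m \<le> K - 1 \<and> {n..K} = {m..K})"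
    using assms by (auto simp: Icc_eq_Icc)
  show ?thesis using True unfolding lam_star_def if_not_P[OF none] by simp
next
  case False
  then have interval: "\<exists>m. 2 \<le> m \<and> m \<le> K - 1 \<and> {n..K} = {m..K}"
    using assms by (intro exI[of _ n]) auto
  have "Min {n..K} = n" using assms by (intro Min_eqI) auto
  moreover have "K - n + 1 = K + 1 - n" using assms by (simp only: atLeastAtMost_iff) arith
  ultimately show ?thesis using False unfolding lam_star_def if_P[OF interval] by simp
qed

lemma sum_lam_star:
  assumes "2 \<le> K"
  shows "(\<Sum>S\<in>subsets_ge2 K. lam_star K p S * g S) = (\<Sum>n = 1..K - 1. lam_star K p {n..K} * g {n..K})"
proof -
  have sub: "(\<lambda>n. {n..K}) ` {1..K - 1} \<subseteq> subsets_ge2 K"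
    using assms by (auto simp: subsets_ge2_def)
  have "(\<Sum>S\<in>subsets_ge2 K. lam_star K p S * g S) = (\<Sum>S\<in>(\<lambda>n. {n..K}) ` {1..K - 1}. lam_star K p S * g S)"
    by (rule sum.mono_neutral_right[OF subsets_ge2_finite sub]) (use assms in \<open>auto simp: lam_star_outside\<close>)
  also have "\<dots> = (\<Sum>n = 1..K - 1. lam_star K p {n..K} * g {n..K})"
    by (rule sum.reindex_cong[where l="\<lambda>n. {n..K}"]) (auto simp: inj_on_def Icc_eq_Icc)
  finally show ?thesis .
qed

lemma sum_powers_plus_sum_complements:
  fixes p :: real
  assumes "2 \<le> K"
  shows "(\<Sum>i<K. p ^ i) + (\<Sum>i = 2..K - 1. 1 - p ^ i) = real K - 1 + p"
proof -
  have "{..<K} = {0, 1} \<union> {2..K - 1}" using assms by auto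
  then have "(\<Sum>i<K. p ^ i) = 1 + p + (\<Sum>i = 2..K - 1. p ^ i)" by (simp add: sum.union_disjoint)
  then show ?thesis using assms by (simp add: sum_subtractf of_nat_diff)
qed

lemma lam_star_in_distributions:
  assumes K: "2 \<le> K" and p: "0 < p" "p < 1"
  shows "lam_star K p \<in> distributions K"
proof -
  have pos: "real K - 1 + p > 0" using K p by simp
  have "0 \<le> 1 - p ^ m" for m using p by (simp add: power_le_one)
  then have nonneg: "0 \<le> lam_star K p S" for S
    unfolding lam_star_def using pos p by (simp add: divide_nonneg_pos del: power_Suc)
  have "{1..K - 1} = insert 1 {2..K - 1}" using K by auto
  then have "(\<Sum>S\<in>subsets_ge2 K. lam_star K p S)
      = lam_star K p {1..K} + (\<Sum>n = 2..K - 1. lam_star K p {n..K})"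
    using sum_lam_star[OF K, of p "\<lambda>_. 1"] by simp
  also have "\<dots> = (1 - p ^ K) / ((1 - p) * (real K - 1 + p))
                 + (\<Sum>n = 2..K - 1. (1 - p ^ (K + 1 - n)) / (real K - 1 + p))"
    using K lam_star_interval[of _ K p] by (simp add: Suc_diff_le)
  also have "\<dots> = ((\<Sum>i<K. p ^ i) + (\<Sum>n = 2..K - 1. 1 - p ^ (K + 1 - n))) / (real K - 1 + p)"
    using p one_diff_power_eq[of p K] by (simp add: sum_divide_distrib add_divide_distrib)
  also have "(\<Sum>n = 2..K - 1. 1 - p ^ (K + 1 - n)) = (\<Sum>i = 2..K - 1. 1 - p ^ i)"
    by (subst sum.atLeastAtMost_rev) (intro sum.cong refl, auto)
  finally have "(\<Sum>S\<in>subsets_ge2 K. lam_star K p S) = 1"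
    using pos sum_powers_plus_sum_complements[OF K] by simp
  moreover have "lam_star K p S = 0" if "S \<notin> subsets_ge2 K" for S
    using that K by (intro lam_star_outside) (auto simp: subsets_ge2_def)
  ultimately show ?thesis unfolding distributions_def using nonneg by auto
qed

lemma inversion_gap_adj_transp_interval:
  assumes k: "k < K"
  shows "inversion_gap p (adj_transp k) {n..K}
       = (if n \<le> k then OA_norm p {n..K} * p ^ (k - n) * (1 - p) else 0)"
proof (cases "n \<le> k")
  case True
  have "{l\<in>{n..K}. l < k} = {n..<k}" using k by auto
  then have below: "card {l\<in>{n..K}. l < k} = k - n" by simp
  have in_S: "k \<in> {n..K}" "Suc k \<in> {n..K}" using True k by auto
  have "inversion_gap p (adj_transp k) {n..K} = OA p id k {n..K} - OA p id (Suc k) {n..K}"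
    using inversion_gap_adj_transp[of "{n..K}" p k] in_S by simp
  also have "\<dots> = OA_norm p {n..K} * p ^ (k - n) * (1 - p)"
    unfolding OA_id_eq card_less_Suc[OF finite_atLeastAtMost in_S(1)] below
    by (simp add: algebra_simps)
  finally show ?thesis using True by simp
qed (simp add: inversion_gap_adj_transp)

text \<open>The weight of the tail {n..K} cancels the factor 1 / (1 - p ^ (K + 1 - n)) of its normalising
  constant, so every \<tau>_k sees the same geometric profile in n.\<close>

lemma lam_star_mult_inversion_gap:
  assumes n: "n \<in> {1..K - 1}" and k: "k < K" and p: "0 < p" "p < 1"
  shows "lam_star K p {n..K} * inversion_gap p (adj_transp k) {n..K} =
     (if n \<le> k then (if n = 1 then p ^ (k - 1) else (1 - p) * p ^ (k - n)) * ((1 - p) / (real K - 1 + p))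
      else 0)"
proof -
  have "p ^ (K + 1 - n) < 1" "p ^ K < 1" using p n by (auto simp: power_less_one_iff)
  then have "1 - p ^ (K + 1 - n) \<noteq> 0" "1 - p ^ K \<noteq> 0" "1 - p \<noteq> 0" using p by auto
  then show ?thesis
    using n unfolding inversion_gap_adj_transp_interval[OF k] lam_star_interval[OF n] OA_norm_def
    by (auto simp: Suc_diff_le)
qed

lemma geometric_drops_sum:
  fixes p :: real
  assumes "1 \<le> k"
  shows "p ^ (k - 1) + (1 - p) * (\<Sum>n = 2..k. p ^ (k - n)) = 1"
proof -
  have "(\<Sum>n = 2..k. p ^ (k - n)) = (\<Sum>i<k - 1. p ^ (k - 1 - Suc i))"
    by (rule sum.reindex_bij_witness[where i="\<lambda>i. i + 2" and j="\<lambda>n. n - 2"])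
       (auto simp: Suc_diff_Suc numeral_2_eq_2)
  then show ?thesis using one_diff_power_eq'[of p "k - 1"] by simp
qed

lemma KL_lam_lam_star_adj_transp:
  assumes k: "1 \<le> k" "k < K" and p: "0 < p" "p < 1"
  shows "KL_lam K (lam_star K p) (OA p id) (OA p (adj_transp k))
       = ln (1 / p) * ((1 - p) / (real K - 1 + p))"
proof -
  let ?V = "(1 - p) / (real K - 1 + p)"
  have K: "2 \<le> K" using k by simp
  have "(\<Sum>S\<in>subsets_ge2 K. lam_star K p S * inversion_gap p (adj_transp k) S)
     = (\<Sum>n = 1..K - 1. if n \<le> k then (if n = 1 then p ^ (k - 1) else (1 - p) * p ^ (k - n)) * ?V else 0)"
    unfolding sum_lam_star[OF K] by (intro sum.cong refl lam_star_mult_inversion_gap k p)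
  also have "\<dots> = (\<Sum>n = 1..k. (if n = 1 then p ^ (k - 1) else (1 - p) * p ^ (k - n)) * ?V)"
    using k by (intro sum.mono_neutral_cong_right) auto
  also have "\<dots> = (p ^ (k - 1) + (1 - p) * (\<Sum>n = 2..k. p ^ (k - n))) * ?V"
  proof -
    have "{1..k} = insert 1 {2..k}" using k by auto
    then show ?thesis
      by (simp add: distrib_right sum_distrib_left sum_distrib_right del: times_divide_eq_right)
  qed
  finally have "(\<Sum>S\<in>subsets_ge2 K. lam_star K p S * inversion_gap p (adj_transp k) S) = ?V"
    unfolding geometric_drops_sum[OF k(1)] by simp
  moreover have "KL_lam K (lam_star K p) (OA p id) (OA p (adj_transp k))
      = ln (1 / p) * (\<Sum>S\<in>subsets_ge2 K. lam_star K p S * inversion_gap p (adj_transp k) S)"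
    unfolding KL_lam_OA_eq[OF adj_transp_permutes[OF k] p] by (simp add: sum_distrib_left mult_ac)
  ultimately show ?thesis by simp
qed

theorem mainTheorem8:
  fixes K :: nat and p :: real
  assumes "K \<ge> 2" and "0 < p" and "p < 1"
  shows "(SUP lam\<in>distributions K. INF \<sigma>\<in>nonid_perms K. KL_lam K lam (OA p id) (OA p \<sigma>))
            = ln (1 / p) * ((1 - p) / (real K - 1 + p))
       \<and> lam_star K p \<in> distributions K
       \<and> (INF \<sigma>\<in>nonid_perms K. KL_lam K (lam_star K p) (OA p id) (OA p \<sigma>))
            = ln (1 / p) * ((1 - p) / (real K - 1 + p))"
proof -
  note K = assms(1) and p = assms(2,3)
  let ?V = "ln (1 / p) * ((1 - p) / (real K - 1 + p))"
  let ?J = "\<lambda>lam. INF \<sigma>\<in>nonid_perms K. KL_lam K lam (OA p id) (OA p \<sigma>)"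
  have star: "lam_star K p \<in> distributions K" by (rule lam_star_in_distributions[OF K p])
  have J_eq: "?J lam = (MIN k\<in>{1..<K}. KL_lam K lam (OA p id) (OA p (adj_transp k)))"
    if "lam \<in> distributions K" for lam
    using that by (intro INF_nonid_perms_eq_Min_adj_transp K p) (auto simp: distributions_def)
  have "?J (lam_star K p) = ?V"
    unfolding J_eq[OF star] using K p
    by (intro Min_eqI) (auto simp: KL_lam_lam_star_adj_transp intro!: image_eqI[of _ _ 1])
  moreover have "?J lam \<le> ?V" if "lam \<in> distributions K" for lam
    unfolding J_eq[OF that] using Min_adj_transp_KL_lam_le[OF that K p] .
  ultimately have "(SUP lam\<in>distributions K. ?J lam) = ?V"
    using star by (intro cSup_eq_maximum) force+
  with star \<open>?J (lam_star K p) = ?V\<close> show ?thesis by simp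
qed

end
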